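(* Consider a GNEP with $N$ players in which player $\nu$ solves $$\min_{x^\nu}\theta_\nu(x)\quad\text{s.t.}\quad g(x)\le0,\ h^\nu(x^\nu)\le0,$$ where $g:\mathbb{R}^n\to\mathbb{R}^m$ and $h^\nu:\mathbb{R}^{n_\nu}\to\mathbb{R}^{p_\nu}$ are continuously differentiable with convex components, and assume that this GNEP has feasible points (points $x$ with $g(x)\le0$ and $h^\nu(x^\nu)\le0$ for all $\nu$). If $\bar x$ is a KKT point of the corresponding Feasibility GNEP, then $g(\bar x)\le0$, i.e. $\bar x$ is feasible for the GNEP.
   Context: Variables: $x=(x^1,\ldots,x^N)\in\mathbb{R}^n$, $x^\nu\in\mathbb{R}^{n_\nu}$. $v_+=\max\{0,v\}$ componentwise; $\nabla_{x^\nu}$ is the partial (transposed) Jacobian w.r.t. $x^\nu$; $\min$ componentwise. The corresponding Feasibility GNEP: player $\nu$ solves $\min_{x^\nu}\|g_+(x)\|^2$ s.t. $h^\nu(x^\nu)\le0$. $\bar x$ is a KKT point of it if for every $\nu$ there is $w^\nu\in\mathbb{R}^{p_\nu}$ with $\nabla_{x^\nu}\|g_+(\bar x)\|^2+\nabla h^\nu(\bar x^\nu)w^\nu=0$ and $\min\{-h^\nu(\bar x^\nu),w^\nu\}=0$. *)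

theory Defs
  imports "HOL-Analysis.Analysis"
begin

text \<open>Each coordinate i belongs to
  exactly one player blk i :: 'p (finite player type); x^nu is the restriction of x to
  the coordinates with blk i = nu. The shared constraint g has components g j, j < m;
  player nu's private constraint h^nu has components h nu j, j < p nu, each a function
  on real^'n that depends only on the block x^nu.\<close>

definition cont_diff :: "(real^'n \<Rightarrow> real) \<Rightarrow> bool" where
  "cont_diff f \<longleftrightarrow> (\<exists>G. (\<forall>x. (f has_derivative (\<lambda>v. G x \<bullet> v)) (at x)) \<and> continuous_on UNIV G)"

definition depends_only_on_block ::
    "('n \<Rightarrow> 'p) \<Rightarrow> 'p \<Rightarrow> (real^'n \<Rightarrow> real) \<Rightarrow> bool" where
  "depends_only_on_block blk \<nu> f \<longleftrightarrow>
     (\<forall>x y. (\<forall>i. blk i = \<nu> \<longrightarrow> x $ i = y $ i) \<longrightarrow> f x = f y)"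

text \<open>The merit function of the Feasibility GNEP: the squared norm of g_+(x).\<close>
definition sq_viol :: "nat \<Rightarrow> (nat \<Rightarrow> real^'n \<Rightarrow> real) \<Rightarrow> real^'n \<Rightarrow> real" where
  "sq_viol m g x = (\<Sum>j<m. (max 0 (g j x))\<^sup>2)"

text \<open>Partial gradients wrt x^nu are the
  block-nu coordinates of the full gradients.\<close>
definition feas_KKT_point ::
  "('n \<Rightarrow> 'p) \<Rightarrow> nat \<Rightarrow> (nat \<Rightarrow> real^'n \<Rightarrow> real) \<Rightarrow> ('p \<Rightarrow> nat) \<Rightarrow>
   ('p \<Rightarrow> nat \<Rightarrow> real^'n \<Rightarrow> real) \<Rightarrow> real^'n \<Rightarrow> bool" where
  "feas_KKT_point blk m g p h xb \<longleftrightarrow>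
     (\<forall>\<nu>. \<exists>w :: nat \<Rightarrow> real.
        (\<exists>D Gh. (sq_viol m g has_derivative (\<lambda>v. D \<bullet> v)) (at xb) \<and>
           (\<forall>j<p \<nu>. (h \<nu> j has_derivative (\<lambda>v. Gh j \<bullet> v)) (at xb)) \<and>
           (\<forall>i. blk i = \<nu> \<longrightarrow> D $ i + (\<Sum>j<p \<nu>. w j * Gh j $ i) = 0)) \<and>
        (\<forall>j<p \<nu>. min (- h \<nu> j xb) (w j) = 0))"

end

theory Submission
  imports Defs
begin

text \<open>Let \<open>D\<close> be the gradient of \<open>\<parallel>g\<^sub>+\<parallel>\<^sup>2\<close> at the KKT point \<open>xb\<close> and \<open>x\<close> a feasible point.
  For each player, stationarity, complementary slackness and the gradient inequality for the
  convex \<open>h\<^sup>\<nu>\<close> give \<open>D\<^sup>\<nu> \<bullet> (x\<^sup>\<nu> - xb\<^sup>\<nu>) \<ge> 0\<close>; summing over the players, \<open>D \<bullet> (x - xb) \<ge> 0\<close>.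
  As \<open>\<parallel>g\<^sub>+\<parallel>\<^sup>2\<close> is convex, the gradient inequality at \<open>xb\<close> then gives
  \<open>\<parallel>g\<^sub>+(xb)\<parallel>\<^sup>2 \<le> \<parallel>g\<^sub>+(x)\<parallel>\<^sup>2 - D \<bullet> (x - xb) \<le> 0\<close>.\<close>

lemma convex_on_has_derivative_above_tangent:
  fixes f :: "'a::real_normed_vector \<Rightarrow> real"
  assumes convex: "convex_on UNIV f" and deriv: "(f has_derivative f') (at a)"
  shows "f a + f' (y - a) \<le> f y"
proof -
  define \<phi> where "\<phi> = (\<lambda>t::real. f (a + t *\<^sub>R (y - a)))"
  have "convex_on UNIV \<phi>"
  proof (rule convex_onI)
    fix t u v :: real assume "0 < t" "t < 1"
    have "a + ((1 - t) * u + t * v) *\<^sub>R (y - a) = (1 - t) *\<^sub>R (a + u *\<^sub>R (y - a)) + t *\<^sub>R (a + v *\<^sub>R (y - a))"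
      by (simp add: algebra_simps)
    then show "\<phi> ((1 - t) *\<^sub>R u + t *\<^sub>R v) \<le> (1 - t) * \<phi> u + t * \<phi> v"
      using convex_onD[OF convex, of t] \<open>0 < t\<close> \<open>t < 1\<close> by (simp add: \<phi>_def)
  qed simp
  moreover have "(\<phi> has_field_derivative f' (y - a)) (at 0)"
  proof -
    have "((\<lambda>t. a + t *\<^sub>R (y - a)) has_derivative (\<lambda>t. t *\<^sub>R (y - a))) (at 0)"
      by (auto intro!: derivative_eq_intros)
    moreover have "(f has_derivative f') (at (a + 0 *\<^sub>R (y - a)))"
      using deriv by simp
    ultimately have "((f \<circ> (\<lambda>t. a + t *\<^sub>R (y - a))) has_derivative f' \<circ> (\<lambda>t. t *\<^sub>R (y - a))) (at 0)"
      by (rule diff_chain_at)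
    then have "(\<phi> has_derivative (\<lambda>t. f' (t *\<^sub>R (y - a)))) (at 0)"
      by (simp add: \<phi>_def o_def)
    moreover have "f' (t *\<^sub>R (y - a)) = t * f' (y - a)" for t
      using has_derivative_linear[OF deriv] by (simp add: linear_scale)
    ultimately show ?thesis
      by (simp add: has_field_derivative_def mult.commute[of _ "f' (y - a)"])
  qed
  ultimately have "f' (y - a) * (1 - 0) \<le> \<phi> 1 - \<phi> 0"
    by (intro convex_on_imp_above_tangent[where A = UNIV]) auto
  then show ?thesis by (simp add: \<phi>_def)
qed

lemma convex_on_max_0:
  assumes "convex_on S f"
  shows "convex_on S (\<lambda>x. max 0 (f x))"
proof (rule convex_onI)
  fix t :: real and x y assume t: "0 < t" "t < 1" and "x \<in> S" "y \<in> S"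
  then have "f ((1 - t) *\<^sub>R x + t *\<^sub>R y) \<le> (1 - t) * f x + t * f y"
    using convex_onD[OF assms] by simp
  also have "\<dots> \<le> (1 - t) * max 0 (f x) + t * max 0 (f y)"
    using t by (intro add_mono mult_left_mono) auto
  finally show "max 0 (f ((1 - t) *\<^sub>R x + t *\<^sub>R y)) \<le> (1 - t) * max 0 (f x) + t * max 0 (f y)"
    using t by simp
qed (use assms convex_on_imp_convex in blast)

lemma convex_on_power2_nonneg:
  assumes "convex_on S f" and nonneg: "\<And>x. x \<in> S \<Longrightarrow> 0 \<le> f x"
  shows "convex_on S (\<lambda>x. (f x)\<^sup>2)"
proof (rule convex_onI)
  fix t :: real and x y assume t: "0 < t" "t < 1" and S: "x \<in> S" "y \<in> S"
  have "f ((1 - t) *\<^sub>R x + t *\<^sub>R y) \<le> (1 - t) * f x + t * f y"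
    using convex_onD[OF assms(1)] t S by simp
  moreover have "0 \<le> f ((1 - t) *\<^sub>R x + t *\<^sub>R y)"
    using S t convex_on_imp_convex[OF assms(1)] by (intro nonneg) (simp add: convex_alt)
  ultimately have "(f ((1 - t) *\<^sub>R x + t *\<^sub>R y))\<^sup>2 \<le> ((1 - t) * f x + t * f y)\<^sup>2"
    by (intro power_mono) auto
  also have "\<dots> \<le> (1 - t) * (f x)\<^sup>2 + t * (f y)\<^sup>2"
    using convex_onD[OF convex_power2, of t "f x" "f y"] t by simp
  finally show "(f ((1 - t) *\<^sub>R x + t *\<^sub>R y))\<^sup>2 \<le> (1 - t) * (f x)\<^sup>2 + t * (f y)\<^sup>2" .
qed (use assms convex_on_imp_convex in blast)

lemma convex_on_sum_fun:
  assumes "finite I" "convex S" "\<And>i. i \<in> I \<Longrightarrow> convex_on S (f i)"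
  shows "convex_on S (\<lambda>x. \<Sum>i\<in>I. f i x)"
  using assms by (induction I rule: finite_induct) (auto simp: convex_on_const)

lemma convex_on_sq_viol:
  assumes "\<And>j. j < m \<Longrightarrow> convex_on UNIV (g j)"
  shows "convex_on UNIV (sq_viol m g)"
  unfolding sq_viol_def
  using assms by (intro convex_on_sum_fun convex_on_power2_nonneg convex_on_max_0) auto

lemma sq_viol_nonneg: "0 \<le> sq_viol m g x"
  by (simp add: sq_viol_def sum_nonneg)

lemma sq_viol_eq_0_iff: "sq_viol m g x = 0 \<longleftrightarrow> (\<forall>j<m. g j x \<le> 0)"
proof -
  have "max 0 a = 0 \<longleftrightarrow> a \<le> (0::real)" for a
    by (simp add: max_def)
  then show ?thesis
    by (auto simp: sq_viol_def sum_nonneg_eq_0_iff)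
qed

definition replace_block :: "('n \<Rightarrow> 'p) \<Rightarrow> 'p \<Rightarrow> real^'n \<Rightarrow> real^'n \<Rightarrow> real^'n" where
  "replace_block blk \<nu> x z = (\<chi> i. if blk i = \<nu> then x $ i else z $ i)"

lemma depends_only_on_block_replace_block:
  assumes "depends_only_on_block blk \<nu> f"
  shows "f (replace_block blk \<nu> x z) = f x"
  using assms by (simp add: depends_only_on_block_def replace_block_def)

lemma replace_block_diff:
  "replace_block blk \<nu> x z - z = (\<chi> i. if blk i = \<nu> then x $ i - z $ i else 0)"
  by (simp add: replace_block_def vec_eq_iff)

lemma inner_diff_eq_sum_replace_block:
  fixes blk :: "'n::finite \<Rightarrow> 'p::finite"
  shows "D \<bullet> (x - z) = (\<Sum>\<nu>\<in>UNIV. D \<bullet> (replace_block blk \<nu> x z - z))"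
proof -
  have "D \<bullet> (x - z) = (\<Sum>i\<in>UNIV. \<Sum>\<nu>\<in>UNIV. if blk i = \<nu> then D $ i * (x $ i - z $ i) else 0)"
    by (simp add: inner_vec_def)
  also have "\<dots> = (\<Sum>\<nu>\<in>UNIV. \<Sum>i\<in>UNIV. if blk i = \<nu> then D $ i * (x $ i - z $ i) else 0)"
    by (rule sum.swap)
  also have "\<dots> = (\<Sum>\<nu>\<in>UNIV. D \<bullet> (replace_block blk \<nu> x z - z))"
    unfolding inner_vec_def replace_block_diff by (intro sum.cong refl) simp
  finally show ?thesis .
qed

lemma inner_replace_block_diff_cong:
  assumes "\<And>i. blk i = \<nu> \<Longrightarrow> D $ i = E $ i"
  shows "D \<bullet> (replace_block blk \<nu> x z - z) = E \<bullet> (replace_block blk \<nu> x z - z)"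
  using assms unfolding inner_vec_def replace_block_def by (intro sum.cong) auto

lemma block_stationarity_imp_inner_replace_block_nonneg:
  assumes h_convex: "\<And>j. j < q \<Longrightarrow> convex_on UNIV (h j)"
    and h_block: "\<And>j. j < q \<Longrightarrow> depends_only_on_block blk \<nu> (h j)"
    and h_deriv: "\<And>j. j < q \<Longrightarrow> (h j has_derivative (\<lambda>v. Gh j \<bullet> v)) (at z)"
    and h_feasible: "\<And>j. j < q \<Longrightarrow> h j x \<le> 0"
    and stationary: "\<And>i. blk i = \<nu> \<Longrightarrow> D $ i + (\<Sum>j<q. w j * Gh j $ i) = 0"
    and complementary: "\<And>j. j < q \<Longrightarrow> min (- h j z) (w j) = 0"
  shows "0 \<le> D \<bullet> (replace_block blk \<nu> x z - z)"
proof -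
  define d where "d = replace_block blk \<nu> x z - z"
  have term_nonpos: "w j * (Gh j \<bullet> d) \<le> 0" if j: "j < q" for j
  proof -
    have w: "0 \<le> w j" "w j * h j z = 0"
      using complementary[OF j] by (auto simp: min_def split: if_splits)
    have "h j z + Gh j \<bullet> d \<le> h j (replace_block blk \<nu> x z)"
      unfolding d_def by (rule convex_on_has_derivative_above_tangent[OF h_convex[OF j] h_deriv[OF j]])
    then have "Gh j \<bullet> d \<le> h j x - h j z"
      using depends_only_on_block_replace_block[OF h_block[OF j]] by simp
    then have "w j * (Gh j \<bullet> d) \<le> w j * (h j x - h j z)"
      using w(1) by (rule mult_left_mono)
    also have "\<dots> = w j * h j x"
      using w(2) by (simp add: right_diff_distrib)
    also have "\<dots> \<le> 0"
      using w(1) h_feasible[OF j] by (rule mult_nonneg_nonpos)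
    finally show ?thesis .
  qed
  have "D \<bullet> d = - (\<Sum>j<q. w j *\<^sub>R Gh j) \<bullet> d"
    unfolding d_def using stationary
    by (intro inner_replace_block_diff_cong) (simp add: eq_neg_iff_add_eq_0)
  also have "\<dots> = - (\<Sum>j<q. w j * (Gh j \<bullet> d))"
    by (simp add: inner_sum_left)
  finally have "D \<bullet> d = - (\<Sum>j<q. w j * (Gh j \<bullet> d))" .
  moreover have "(\<Sum>j<q. w j * (Gh j \<bullet> d)) \<le> 0"
    using term_nonpos by (intro sum_nonpos) simp
  ultimately show ?thesis
    unfolding d_def[symmetric] by linarith
qed

lemma feas_KKT_point_imp_inner_replace_block_nonneg:
  assumes KKT: "feas_KKT_point blk m g p h xb"
    and D: "(sq_viol m g has_derivative (\<lambda>v. D \<bullet> v)) (at xb)"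
    and h_convex: "\<And>\<nu> j. j < p \<nu> \<Longrightarrow> convex_on UNIV (h \<nu> j)"
    and h_block: "\<And>\<nu> j. j < p \<nu> \<Longrightarrow> depends_only_on_block blk \<nu> (h \<nu> j)"
    and h_feasible: "\<And>\<nu> j. j < p \<nu> \<Longrightarrow> h \<nu> j x \<le> 0"
  shows "0 \<le> D \<bullet> (replace_block blk \<nu> x xb - xb)"
proof -
  obtain w D\<^sub>\<nu> Gh where D\<^sub>\<nu>: "(sq_viol m g has_derivative (\<lambda>v. D\<^sub>\<nu> \<bullet> v)) (at xb)"
    and Gh: "\<forall>j<p \<nu>. (h \<nu> j has_derivative (\<lambda>v. Gh j \<bullet> v)) (at xb)"
    and stationary: "\<forall>i. blk i = \<nu> \<longrightarrow> D\<^sub>\<nu> $ i + (\<Sum>j<p \<nu>. w j * Gh j $ i) = 0"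
    and complementary: "\<forall>j<p \<nu>. min (- h \<nu> j xb) (w j) = 0"
    using KKT unfolding feas_KKT_point_def by blast
  have "0 \<le> D\<^sub>\<nu> \<bullet> (replace_block blk \<nu> x xb - xb)"
    using h_convex h_block h_feasible Gh stationary complementary
    by (intro block_stationarity_imp_inner_replace_block_nonneg[where h = "h \<nu>" and q = "p \<nu>"]) auto
  moreover have "D\<^sub>\<nu> \<bullet> u = D \<bullet> u" for u
    using fun_cong[OF has_derivative_unique[OF D\<^sub>\<nu> D], of u] by simp
  ultimately show ?thesis
    by metis
qed

theorem theorem4p4:
  fixes blk :: "'n::finite \<Rightarrow> 'p::finite"
    and m :: nat and g :: "nat \<Rightarrow> real^'n \<Rightarrow> real"
    and p :: "'p \<Rightarrow> nat" and h :: "'p \<Rightarrow> nat \<Rightarrow> real^'n \<Rightarrow> real"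
    and xb :: "real^'n"
  assumes g_C1: "\<And>j. j < m \<Longrightarrow> cont_diff (g j)"
    and g_convex: "\<And>j. j < m \<Longrightarrow> convex_on UNIV (g j)"
    and h_block: "\<And>\<nu> j. j < p \<nu> \<Longrightarrow> depends_only_on_block blk \<nu> (h \<nu> j)"
    and h_C1: "\<And>\<nu> j. j < p \<nu> \<Longrightarrow> cont_diff (h \<nu> j)"
    and h_convex: "\<And>\<nu> j. j < p \<nu> \<Longrightarrow> convex_on UNIV (h \<nu> j)"
    and feasible: "\<exists>x. (\<forall>j<m. g j x \<le> 0) \<and> (\<forall>\<nu>. \<forall>j<p \<nu>. h \<nu> j x \<le> 0)"
    and KKT: "feas_KKT_point blk m g p h xb"
  shows "\<forall>j<m. g j xb \<le> 0"
proof -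
  obtain x where gx: "\<forall>j<m. g j x \<le> 0" and hx: "\<And>\<nu> j. j < p \<nu> \<Longrightarrow> h \<nu> j x \<le> 0"
    using feasible by blast
  obtain D where D: "(sq_viol m g has_derivative (\<lambda>v. D \<bullet> v)) (at xb)"
    using KKT unfolding feas_KKT_point_def by blast
  have "0 \<le> D \<bullet> (replace_block blk \<nu> x xb - xb)" for \<nu>
    by (rule feas_KKT_point_imp_inner_replace_block_nonneg[OF KKT D h_convex h_block hx])
  then have "0 \<le> D \<bullet> (x - xb)"
    by (simp add: inner_diff_eq_sum_replace_block[of D x xb blk] sum_nonneg)
  moreover have "sq_viol m g xb + D \<bullet> (x - xb) \<le> sq_viol m g x"
    using convex_on_sq_viol[OF g_convex] D by (rule convex_on_has_derivative_above_tangent)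
  moreover have "sq_viol m g x = 0"
    using gx by (simp add: sq_viol_eq_0_iff)
  ultimately have "sq_viol m g xb = 0"
    using sq_viol_nonneg[of m g xb] by linarith
  then show ?thesis
    by (simp add: sq_viol_eq_0_iff)
qed

end
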